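(* Let $K\subseteq L$ be convex bodies in $\mathbb{R}^d$ with the origin in the interior of $K$. Let $F$ be an $s$-dimensional linear subspace, $(v_1,p_1),\dots,(v_m,p_m)$ contact pairs of $K$ and $L$, and $\alpha_1,\dots,\alpha_m$ positive weights with \[ P_F\Big(\sum_i\alpha_ip_i\otimes v_i\Big)P_F=P_F,\quad\sum_i\alpha_ip_i=0,\quad \operatorname{tr}\Big(\sum_i\alpha_ip_i\otimes v_i\Big)=\sum_i\alpha_i=d. \] Assume additionally that $P_FK\subset L\cap F$. Then there exist a point $z$ in the relative interior of $L\cap F$, contact pairs $(v_1',p_1'),\dots,(v_m',p_m')$ of $K-z$ and $L-z$, and weights $c_1,\dots,c_m>0$ such that \[ \sum_i c_ip_i'\otimes v_i'=\sum_i\alpha_ip_i\otimes v_i\quad\text{and}\quad \sum_ic_iP_Fv_i'=\sum_ic_ip_i'=0. \]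
   Context: A convex body is a compact convex set with nonempty interior. $P_F$ is orthogonal projection onto $F$. The polar of $S$ is $S^\circ=\{p:\langle x,p\rangle\le1\ \forall x\in S\}$. For convex bodies $K\subseteq L$, a contact pair of $K$ and $L$ is a pair $(v,p)$ with $v\in\partial K\cap\partial L$, $p\in\partial K^\circ\cap\partial L^\circ$, $\langle p,v\rangle=1$. For vectors $p,v$, $p\otimes v$ is the operator $x\mapsto\langle v,x\rangle p$. *)

theory Defs
  imports "HOL-Analysis.Analysis"
begin

definition convex_body :: "'a::euclidean_space set \<Rightarrow> bool" where
  "convex_body K \<longleftrightarrow> compact K \<and> convex K \<and> interior K \<noteq> {}"

definition polar :: "'a::euclidean_space set \<Rightarrow> 'a set" where
  "polar S = {p. \<forall>x\<in>S. inner x p \<le> 1}"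

definition contact_pair :: "'a::euclidean_space set \<Rightarrow> 'a set \<Rightarrow> 'a \<Rightarrow> 'a \<Rightarrow> bool" where
  "contact_pair K L v p \<longleftrightarrow>
     v \<in> frontier K \<inter> frontier L \<and> p \<in> frontier (polar K) \<inter> frontier (polar L)
     \<and> inner p v = 1"

definition proj :: "'a::euclidean_space set \<Rightarrow> 'a \<Rightarrow> 'a" where
  "proj F x = (THE y. y \<in> F \<and> (\<forall>w\<in>F. inner (x - y) w = 0))"

definition tensor :: "'a::euclidean_space \<Rightarrow> 'a \<Rightarrow> 'a \<Rightarrow> 'a" where
  "tensor p v = (\<lambda>x. inner v x *\<^sub>R p)"

definition op_trace :: "('a::euclidean_space \<Rightarrow> 'a) \<Rightarrow> real" where
  "op_trace A = (\<Sum>b\<in>Basis. inner (A b) b)"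

end

theory Submission
  imports Defs
begin

text \<open>
  Write \<open>A = \<Sum>\<^sub>i \<alpha>\<^sub>i p\<^sub>i \<otimes> v\<^sub>i\<close>, \<open>S = \<Sum>\<^sub>i \<alpha>\<^sub>i v\<^sub>i\<close> and \<open>P = P\<^sub>F\<close>.
  Translating by a point \<open>z\<close> with \<open>t\<^sub>i = \<langle>p\<^sub>i, z\<rangle> < 1\<close> turns the contact pairs
  into \<open>(v\<^sub>i - z, p\<^sub>i / (1 - t\<^sub>i))\<close>, and with the weights \<open>c\<^sub>i = \<alpha>\<^sub>i (1 - t\<^sub>i)\<close>
  the operator changes by \<open>(\<Sum>\<^sub>i \<alpha>\<^sub>i p\<^sub>i) \<otimes> z = 0\<close>, while \<open>\<Sum>\<^sub>i c\<^sub>i p\<^sub>i' = \<Sum>\<^sub>i \<alpha>\<^sub>i p\<^sub>i = 0\<close>.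
  Since \<open>P A P = P\<close> gives \<open>P A\<^sup>* P = P\<close> and \<open>\<Sum>\<^sub>i c\<^sub>i = d\<close>, for \<open>z \<in> F\<close> we get
  \<open>P (\<Sum>\<^sub>i c\<^sub>i (v\<^sub>i - z)) = P S - P A\<^sup>* z - d z = P S - (d + 1) z\<close>, which vanishes for
  \<open>z = P S / (d + 1) = (d / (d + 1)) P (S / d)\<close>. Here \<open>S / d \<in> K\<close>, so \<open>P (S / d) \<in> L \<inter> F\<close>;
  shrinking it towards \<open>0 \<in> rel_interior (L \<inter> F)\<close> puts \<open>z\<close> in the relative interior
  and makes every \<open>t\<^sub>i \<le> d / (d + 1) < 1\<close>.
\<close>

lemma orthogonal_foot_unique:
  assumes F: "subspace F"
    and y: "y \<in> F" "\<forall>w\<in>F. inner (x - y) w = 0"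
    and y': "y' \<in> F" "\<forall>w\<in>F. inner (x - y') w = 0"
  shows "y' = y"
proof -
  have "y - y' \<in> F" using F y y' by (simp add: subspace_diff)
  then have "inner (x - y') (y - y') = 0" "inner (x - y) (y - y') = 0" using y y' by auto
  then have "inner (y - y') (y - y') = 0" by (simp add: inner_diff_left)
  then show ?thesis by simp
qed

lemma proj_eqI:
  assumes "subspace F" "y \<in> F" "\<forall>w\<in>F. inner (x - y) w = 0"
  shows "proj F x = y"
  unfolding proj_def
proof (rule the_equality)
  show "y' = y" if "y' \<in> F \<and> (\<forall>w\<in>F. inner (x - y') w = 0)" for y'
    using that by (blast intro: orthogonal_foot_unique[OF assms])
qed (use assms in simp)

lemma proj_in_subspace_and_orthogonal:
  assumes F: "subspace F"
  shows "proj F x \<in> F \<and> (\<forall>w\<in>F. inner (x - proj F x) w = 0)"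
proof -
  obtain y z where y: "y \<in> span F" and z: "\<And>w. w \<in> span F \<Longrightarrow> orthogonal z w"
    and "x = y + z"
    using orthogonal_subspace_decomp_exists by blast
  moreover have "span F = F" using F by simp
  ultimately have foot: "y \<in> F \<and> (\<forall>w\<in>F. inner (x - y) w = 0)"
    by (auto simp: orthogonal_def)
  then have "proj F x = y" using F by (blast intro: proj_eqI)
  with foot show ?thesis by simp
qed

lemma proj_in_subspace: "subspace F \<Longrightarrow> proj F x \<in> F"
  using proj_in_subspace_and_orthogonal by blast

lemma inner_diff_proj_eq_0: "subspace F \<Longrightarrow> w \<in> F \<Longrightarrow> inner (x - proj F x) w = 0"
  using proj_in_subspace_and_orthogonal by blast

lemma proj_eq_self: "subspace F \<Longrightarrow> z \<in> F \<Longrightarrow> proj F z = z"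
  by (rule proj_eqI) auto

lemma linear_proj:
  assumes F: "subspace F"
  shows "linear (proj F)"
proof (rule linearI)
  fix a b
  have "inner (a + b - (proj F a + proj F b)) w = 0" if "w \<in> F" for w
    using inner_diff_proj_eq_0[OF F that, of a] inner_diff_proj_eq_0[OF F that, of b]
    by (simp add: inner_diff_left inner_add_left)
  then show "proj F (a + b) = proj F a + proj F b"
    using F by (intro proj_eqI) (auto intro: subspace_add proj_in_subspace)
next
  fix c :: real and a
  have "inner (c *\<^sub>R a - c *\<^sub>R proj F a) w = 0" if "w \<in> F" for w
    using inner_diff_proj_eq_0[OF F that, of a]
    by (simp add: inner_diff_left)
  then show "proj F (c *\<^sub>R a) = c *\<^sub>R proj F a"
    using F by (intro proj_eqI) (auto intro: subspace_scale proj_in_subspace)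
qed

lemma inner_proj_commute:
  assumes F: "subspace F"
  shows "inner (proj F x) y = inner x (proj F y)"
proof -
  have "inner (y - proj F y) (proj F x) = 0" "inner (x - proj F x) (proj F y) = 0"
    using F by (simp_all add: inner_diff_proj_eq_0 proj_in_subspace)
  then show ?thesis
    by (simp add: inner_diff_left inner_commute[of "proj F x"])
qed

lemma proj_adjoint_compression:
  assumes F: "subspace F"
    and adjoint: "\<And>x y. inner (A x) y = inner x (B y)"
    and compression: "\<And>x. proj F (A (proj F x)) = proj F x"
    and z: "z \<in> F"
  shows "proj F (B z) = z"
proof -
  have Pz: "proj F z = z" using F z by (rule proj_eq_self)
  have "inner (proj F (B z)) w = inner z w" for w
  proof -
    have "inner (proj F (B z)) w = inner (B z) (proj F w)"
      using F by (rule inner_proj_commute)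
    also have "\<dots> = inner (A (proj F w)) z"
      unfolding adjoint by (rule inner_commute)
    also have "\<dots> = inner (proj F z) (A (proj F w))"
      by (simp add: inner_commute Pz)
    also have "\<dots> = inner z (proj F (A (proj F w)))"
      using F by (rule inner_proj_commute)
    also have "\<dots> = inner (proj F z) w"
      unfolding compression using F by (rule inner_proj_commute[symmetric])
    finally show ?thesis by (simp only: Pz)
  qed
  then show ?thesis using vector_eq_rdot by blast
qed

lemma inner_sum_tensor_adjoint:
  "inner (\<Sum>i\<in>I. \<alpha> i *\<^sub>R tensor (p i) (v i) x) y = inner x (\<Sum>i\<in>I. (\<alpha> i * inner (p i) y) *\<^sub>R v i)"
  by (simp add: tensor_def inner_sum_left inner_sum_right inner_commute mult_ac)

lemma closed_polar: "closed (polar S)"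
proof -
  have "polar S = (\<Inter>x\<in>S. {p. inner x p \<le> 1})" by (auto simp: polar_def)
  then show ?thesis by (auto intro: closed_halfspace_le)
qed

lemma frontier_polar_subset: "frontier (polar S) \<subseteq> polar S"
  using closed_polar frontier_subset_closed by blast

lemma frontier_polarI:
  assumes q: "q \<in> polar S" and x: "x \<in> S" "inner x q = 1"
  shows "q \<in> frontier (polar S)"
proof -
  have "q \<notin> interior (polar S)"
  proof
    assume "q \<in> interior (polar S)"
    then obtain r where r: "r > 0" "ball q r \<subseteq> polar S" unfolding mem_interior by blast
    have "q \<noteq> 0" using x by auto
    define t where "t = r / (2 * norm q)"
    have t: "t > 0" using r \<open>q \<noteq> 0\<close> by (simp add: t_def)
    have "dist q ((1 + t) *\<^sub>R q) = r / 2"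
      using t r \<open>q \<noteq> 0\<close> by (simp add: dist_norm t_def algebra_simps)
    then have "(1 + t) *\<^sub>R q \<in> polar S" using r by auto
    then have "(1 + t) * inner x q \<le> 1" using x by (auto simp: polar_def)
    then show False using x t by simp
  qed
  then show ?thesis using q closure_subset by (auto simp: frontier_def)
qed

lemma polar_translate:
  assumes p: "p \<in> polar Q" and t: "inner p z < 1"
  shows "(1 / (1 - inner p z)) *\<^sub>R p \<in> polar ((\<lambda>x. x - z) ` Q)"
proof -
  have "inner (x - z) ((1 / (1 - inner p z)) *\<^sub>R p) \<le> 1" if "x \<in> Q" for x
  proof -
    have "inner x p \<le> 1" using p that by (auto simp: polar_def)
    then show ?thesis
      using t by (simp add: inner_diff_left inner_diff_right inner_commute divide_simps)
  qed
  then show ?thesis by (auto simp: polar_def)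
qed

lemma frontier_translate: "frontier ((\<lambda>x. x - z) ` Q) = (\<lambda>x. x - z) ` frontier Q"
  for z :: "'a::real_normed_vector"
  using frontier_translation[of "- z" Q] by (simp cong: image_cong_simp)

lemma contact_pair_translate:
  assumes cp: "contact_pair K L v p" and K: "closed K" and L: "closed L"
    and t: "inner p z < 1"
  shows "contact_pair ((\<lambda>x. x - z) ` K) ((\<lambda>x. x - z) ` L) (v - z) ((1 / (1 - inner p z)) *\<^sub>R p)"
proof -
  let ?p' = "(1 / (1 - inner p z)) *\<^sub>R p"
  have v: "v \<in> frontier K" "v \<in> frontier L" and p: "p \<in> polar K" "p \<in> polar L"
    and pv: "inner p v = 1"
    using cp frontier_polar_subset by (auto simp: contact_pair_def)
  have "v \<in> K" "v \<in> L" using v K L frontier_subset_closed by blast+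
  have p'v: "inner (v - z) ?p' = 1"
    using t pv by (simp add: inner_diff_left inner_diff_right inner_commute divide_simps)
  have "?p' \<in> frontier (polar ((\<lambda>x. x - z) ` Q))" if "p \<in> polar Q" "v \<in> Q" for Q
    using that(2) p'v by (intro frontier_polarI[OF polar_translate[OF that(1) t]]) auto
  moreover have "v - z \<in> frontier ((\<lambda>x. x - z) ` Q)" if "v \<in> frontier Q" for Q
    using that by (simp add: frontier_translate)
  ultimately show ?thesis
    using v p \<open>v \<in> K\<close> \<open>v \<in> L\<close> p'v
    unfolding contact_pair_def by (simp add: inner_commute)
qed

lemma zero_in_rel_interior_Int_subspace:
  assumes L: "0 \<in> interior L" and F: "subspace F"
  shows "0 \<in> rel_interior (L \<inter> F)"
proof -
  have "affine hull (L \<inter> F) \<subseteq> F"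
    by (rule hull_minimal) (auto simp: subspace_imp_affine F)
  moreover have "0 \<in> F" using F by (rule subspace_0)
  ultimately show ?thesis
    unfolding mem_rel_interior using L interior_subset open_interior by blast
qed

lemma scaleR_in_rel_interior:
  fixes C :: "'a::euclidean_space set"
  assumes C: "convex C" "0 \<in> rel_interior C" and y: "y \<in> C" and a: "0 \<le> a" "a < 1"
  shows "a *\<^sub>R y \<in> rel_interior C"
proof -
  have "y - (1 - a) *\<^sub>R (y - 0) \<in> rel_interior C"
    using a y closure_subset by (intro rel_interior_closure_convex_shrink[OF C]) auto
  then show ?thesis by (simp add: algebra_simps)
qed

lemma sum_tensor_translate:
  assumes t: "\<forall>i\<in>I. inner (p i) z \<noteq> 1" and p0: "(\<Sum>i\<in>I. \<alpha> i *\<^sub>R p i) = 0"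
  shows "(\<Sum>i\<in>I. (\<alpha> i * (1 - inner (p i) z)) *\<^sub>R tensor ((1 / (1 - inner (p i) z)) *\<^sub>R p i) (v i - z) x)
       = (\<Sum>i\<in>I. \<alpha> i *\<^sub>R tensor (p i) (v i) x)"
proof -
  have "(\<alpha> i * (1 - inner (p i) z)) *\<^sub>R tensor ((1 / (1 - inner (p i) z)) *\<^sub>R p i) (v i - z) x
      = \<alpha> i *\<^sub>R tensor (p i) (v i) x - inner z x *\<^sub>R (\<alpha> i *\<^sub>R p i)" if "i \<in> I" for i
  proof -
    have "1 - inner (p i) z \<noteq> 0" using t that by simp
    then have "(\<alpha> i * (1 - inner (p i) z)) *\<^sub>R tensor ((1 / (1 - inner (p i) z)) *\<^sub>R p i) (v i - z) x
        = (\<alpha> i * inner (v i - z) x) *\<^sub>R p i"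
      by (simp add: tensor_def)
    then show ?thesis by (simp add: tensor_def algebra_simps)
  qed
  then have "(\<Sum>i\<in>I. (\<alpha> i * (1 - inner (p i) z)) *\<^sub>R tensor ((1 / (1 - inner (p i) z)) *\<^sub>R p i) (v i - z) x)
      = (\<Sum>i\<in>I. \<alpha> i *\<^sub>R tensor (p i) (v i) x) - inner z x *\<^sub>R (\<Sum>i\<in>I. \<alpha> i *\<^sub>R p i)"
    by (simp add: sum_subtractf scaleR_sum_right)
  then show ?thesis using p0 by simp
qed

lemma proj_sum_translate_eq_0:
  assumes F: "subspace F"
    and compression: "\<forall>x. proj F (\<Sum>i\<in>I. \<alpha> i *\<^sub>R tensor (p i) (v i) (proj F x)) = proj F x"
    and p0: "(\<Sum>i\<in>I. \<alpha> i *\<^sub>R p i) = 0" and total: "sum \<alpha> I = d"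
    and z: "z \<in> F" "(d + 1) *\<^sub>R z = proj F (\<Sum>i\<in>I. \<alpha> i *\<^sub>R v i)"
  shows "(\<Sum>i\<in>I. (\<alpha> i * (1 - inner (p i) z)) *\<^sub>R proj F (v i - z)) = 0"
proof -
  have adjoint_z: "proj F (\<Sum>i\<in>I. (\<alpha> i * inner (p i) z) *\<^sub>R v i) = z"
    by (rule proj_adjoint_compression[OF F inner_sum_tensor_adjoint _ z(1)])
      (use compression in simp)
  have "(\<Sum>i\<in>I. \<alpha> i * inner (p i) z) = inner (\<Sum>i\<in>I. \<alpha> i *\<^sub>R p i) z"
    by (simp add: inner_sum_left)
  then have c_total: "(\<Sum>i\<in>I. \<alpha> i * (1 - inner (p i) z)) = d"
    using p0 total by (simp add: algebra_simps sum_subtractf)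
  have "(\<Sum>i\<in>I. (\<alpha> i * (1 - inner (p i) z)) *\<^sub>R (v i - z))
      = (\<Sum>i\<in>I. \<alpha> i *\<^sub>R v i) - (\<Sum>i\<in>I. (\<alpha> i * inner (p i) z) *\<^sub>R v i)
        - (\<Sum>i\<in>I. \<alpha> i * (1 - inner (p i) z)) *\<^sub>R z"
    unfolding scaleR_sum_left sum_subtractf[symmetric]
    by (rule sum.cong) (simp_all add: algebra_simps)
  then have "proj F (\<Sum>i\<in>I. (\<alpha> i * (1 - inner (p i) z)) *\<^sub>R (v i - z)) = (d + 1) *\<^sub>R z - z - d *\<^sub>R z"
    using linear_proj[OF F] z(2) adjoint_z c_total proj_eq_self[OF F z(1)]
    by (simp add: linear_diff linear_scale)
  moreover have "proj F (\<Sum>i\<in>I. (\<alpha> i * (1 - inner (p i) z)) *\<^sub>R (v i - z))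
      = (\<Sum>i\<in>I. (\<alpha> i * (1 - inner (p i) z)) *\<^sub>R proj F (v i - z))"
    by (simp only: linear_sum[OF linear_proj[OF F]] linear_scale[OF linear_proj[OF F]])
  ultimately show ?thesis by (simp add: algebra_simps)
qed

lemma translate_contact_decomposition:
  assumes K: "closed K" and L: "closed L"
    and contact: "\<forall>i<m. contact_pair K L (v i) (p i)" and pos: "\<forall>i<m. \<alpha> i > 0"
    and F: "subspace F"
    and compression: "\<forall>x. proj F (\<Sum>i<m. \<alpha> i *\<^sub>R tensor (p i) (v i) (proj F x)) = proj F x"
    and p0: "(\<Sum>i<m. \<alpha> i *\<^sub>R p i) = 0" and total: "(\<Sum>i<m. \<alpha> i) = d"
    and z: "z \<in> F" "(d + 1) *\<^sub>R z = proj F (\<Sum>i<m. \<alpha> i *\<^sub>R v i)"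
    and t: "\<forall>i<m. inner (p i) z < 1"
  shows "\<exists>v' p' :: nat \<Rightarrow> 'a::euclidean_space. \<exists>c :: nat \<Rightarrow> real.
           (\<forall>i<m. contact_pair ((\<lambda>x. x - z) ` K) ((\<lambda>x. x - z) ` L) (v' i) (p' i))
         \<and> (\<forall>i<m. c i > 0)
         \<and> (\<forall>x. (\<Sum>i<m. c i *\<^sub>R tensor (p' i) (v' i) x) = (\<Sum>i<m. \<alpha> i *\<^sub>R tensor (p i) (v i) x))
         \<and> (\<Sum>i<m. c i *\<^sub>R proj F (v' i)) = 0
         \<and> (\<Sum>i<m. c i *\<^sub>R p' i) = 0"
proof (intro exI conjI allI impI)
  define c where "c i = \<alpha> i * (1 - inner (p i) z)" for i
  define p' where "p' i = (1 / (1 - inner (p i) z)) *\<^sub>R p i" for i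
  show "contact_pair ((\<lambda>x. x - z) ` K) ((\<lambda>x. x - z) ` L) (v i - z) (p' i)" if "i < m" for i
    unfolding p'_def using contact t that K L by (blast intro: contact_pair_translate)
  show "c i > 0" if "i < m" for i
    unfolding c_def using pos t that by simp
  show "(\<Sum>i<m. c i *\<^sub>R tensor (p' i) (v i - z) x) = (\<Sum>i<m. \<alpha> i *\<^sub>R tensor (p i) (v i) x)" for x
    unfolding c_def p'_def using t p0 by (intro sum_tensor_translate) auto
  show "(\<Sum>i<m. c i *\<^sub>R proj F (v i - z)) = 0"
    unfolding c_def using F compression p0 total z by (rule proj_sum_translate_eq_0)
  have "c i *\<^sub>R p' i = \<alpha> i *\<^sub>R p i" if "i < m" for i
  proof -
    have "inner (p i) z < 1" using t that by blast
    then have "1 - inner (p i) z \<noteq> 0" by simp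
    then show ?thesis by (simp add: c_def p'_def)
  qed
  then have "(\<Sum>i<m. c i *\<^sub>R p' i) = (\<Sum>i<m. \<alpha> i *\<^sub>R p i)" by (intro sum.cong) auto
  then show "(\<Sum>i<m. c i *\<^sub>R p' i) = 0" using p0 by simp
qed

lemma translation_centre_exists:
  fixes K L F :: "'a::euclidean_space set"
  assumes K: "convex K" and L: "convex L" "0 \<in> interior L" and F: "subspace F"
    and PK: "proj F ` K \<subseteq> L \<inter> F"
    and I: "finite I" and v: "\<forall>i\<in>I. v i \<in> K" and nonneg: "\<forall>i\<in>I. \<alpha> i \<ge> 0"
    and total: "sum \<alpha> I = d" and d: "d > 0"
  obtains z where "z \<in> rel_interior (L \<inter> F)" "z \<in> F"
    "(d + 1) *\<^sub>R z = proj F (\<Sum>i\<in>I. \<alpha> i *\<^sub>R v i)" "\<forall>q\<in>polar L. inner q z < 1"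
proof
  have "(\<Sum>i\<in>I. (\<alpha> i / d) *\<^sub>R v i) \<in> K"
    using K I v nonneg total d by (intro convex_sum) (auto simp: sum_divide_distrib[symmetric])
  then have y: "proj F ((1 / d) *\<^sub>R (\<Sum>i\<in>I. \<alpha> i *\<^sub>R v i)) \<in> L \<inter> F" (is "?y \<in> _")
    using PK by (auto simp: scaleR_sum_right)
  define z where "z = (d / (d + 1)) *\<^sub>R ?y"
  show "z \<in> rel_interior (L \<inter> F)"
    unfolding z_def using L F y d
    by (intro scaleR_in_rel_interior zero_in_rel_interior_Int_subspace)
      (auto simp: convex_Int subspace_imp_convex)
  show "z \<in> F" using y F by (simp add: z_def subspace_scale)
  show "(d + 1) *\<^sub>R z = proj F (\<Sum>i\<in>I. \<alpha> i *\<^sub>R v i)"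
    unfolding z_def using d linear_proj[OF F] by (simp add: linear_scale)
  show "\<forall>q\<in>polar L. inner q z < 1"
  proof
    fix q assume "q \<in> polar L"
    then have "inner q ?y \<le> 1" using y by (auto simp: polar_def inner_commute)
    then have "inner q z \<le> d / (d + 1)"
      unfolding z_def using d by (simp add: mult_left_le del: times_divide_eq_left)
    also have "\<dots> < 1" using d by simp
    finally show "inner q z < 1" .
  qed
qed

theorem mainTheorem11:
  fixes K L F :: "'a::euclidean_space set"
    and d s m :: nat
    and v p :: "nat \<Rightarrow> 'a" and \<alpha> :: "nat \<Rightarrow> real"
  assumes "d = DIM('a)"
    and "convex_body K" and "convex_body L" and "K \<subseteq> L"
    and "0 \<in> interior K"
    and "subspace F" and "dim F = s"
    and "\<forall>i<m. contact_pair K L (v i) (p i)"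
    and "\<forall>i<m. \<alpha> i > 0"
    and "\<forall>x. proj F ((\<Sum>i<m. \<alpha> i *\<^sub>R tensor (p i) (v i) (proj F x))) = proj F x"
    and "(\<Sum>i<m. \<alpha> i *\<^sub>R p i) = 0"
    and "op_trace (\<lambda>x. \<Sum>i<m. \<alpha> i *\<^sub>R tensor (p i) (v i) x) = real d"
    and "(\<Sum>i<m. \<alpha> i) = real d"
    and "proj F ` K \<subseteq> L \<inter> F"
  shows "\<exists>z \<in> rel_interior (L \<inter> F). \<exists>v' p' :: nat \<Rightarrow> 'a. \<exists>c :: nat \<Rightarrow> real.
           (\<forall>i<m. contact_pair ((\<lambda>x. x - z) ` K) ((\<lambda>x. x - z) ` L) (v' i) (p' i))
         \<and> (\<forall>i<m. c i > 0)
         \<and> (\<forall>x. (\<Sum>i<m. c i *\<^sub>R tensor (p' i) (v' i) x) = (\<Sum>i<m. \<alpha> i *\<^sub>R tensor (p i) (v i) x))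
         \<and> (\<Sum>i<m. c i *\<^sub>R proj F (v' i)) = 0
         \<and> (\<Sum>i<m. c i *\<^sub>R p' i) = 0"
proof -
  note dim = assms(1) and K = assms(2) and L = assms(3) and KL = assms(4) and K0 = assms(5)
    and F = assms(6) and contact = assms(8) and pos = assms(9) and compression = assms(10)
    and p0 = assms(11) and total = assms(13) and PK = assms(14)
  have closed: "closed K" "closed L" using K L by (simp_all add: convex_body_def compact_imp_closed)
  have vK: "\<forall>i\<in>{..<m}. v i \<in> K"
    using contact closed(1) frontier_subset_closed by (auto simp: contact_pair_def)
  have L0: "0 \<in> interior L" using K0 KL interior_mono by blast
  obtain z where z: "z \<in> rel_interior (L \<inter> F)" "z \<in> F"
      "(real d + 1) *\<^sub>R z = proj F (\<Sum>i<m. \<alpha> i *\<^sub>R v i)" "\<forall>q\<in>polar L. inner q z < 1"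
    by (rule translation_centre_exists[of K L F "{..<m}" v \<alpha> "real d"])
      (use K L L0 F PK vK pos total dim in \<open>auto simp: convex_body_def less_imp_le\<close>)
  have "\<forall>i<m. inner (p i) z < 1"
    using contact z(4) frontier_polar_subset by (auto simp: contact_pair_def)
  then show ?thesis
    using z(1) translate_contact_decomposition[OF closed contact pos F compression p0 total z(2,3)]
    by blast
qed

end
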